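(* Consider the one-dimensional obstacle problem $\min(v_t + \mathcal{A} v, v-\varphi(t,x)) = f(t,x)$ on $(0,T)\times(X_{\min},X_{\max})$ with $\mathcal{A} v = -a(t,x) v_{xx} + b(t,x) v_x + r(t,x) v$, $a=\frac12\sigma^2$, under the assumptions: $a$, $b$, $r$ bounded; there is $\eta_0>0$ with $a(t,x)\geq \eta_0$ for all $(t,x)$; and $a$ is Lipschitz continuous in $x$ uniformly in $t$. Use the uniform grid $x_j = X_{\min}+jh$, $j=0,\dots,J+1$, $h=(X_{\max}-X_{\min})/(J+1)$, time step $\tau=T/N$, $t_n=n\tau$, and let $A$ be the $J\times J$ centered finite-difference matrix $A=\frac{1}{h^2}\mathrm{tridiag}(-a_i,\,2a_i,\,-a_i)+\frac{1}{2h}\mathrm{tridiag}(-b_i,\,0,\,b_i)+\mathrm{diag}(r_i)$ (with $a_i=a(t,x_i)$ etc.), $q^{n}$ the vector containing the Dirichlet boundary contributions, $\varphi^{n}_j=\varphi(t_n,x_j)$, $f^n_j=f(t_n,x_j)$, $g^{n}=\varphi^{n}+f^{n}$. Let $u^n\in\mathbb{R}^J$ solve the BDF2 obstacle scheme $$\min\Big( (I_J + \tfrac{2}{3}\tau A)\, u^{n+1} - \tfrac{4}{3} u^n + \tfrac{1}{3} u^{n-1} + \tfrac{2}{3} \tau q^{n+1} - \tfrac{2}{3}\tau f^{n+1},\ u^{n+1}-g^{n+1}\Big) = 0,\quad n\geq 1,$$ and let $v^n\in\mathbb{R}^J$ (values $v(t_n,x_j)$ of some function $v$) solve the perturbed scheme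 $$\min\Big( (I_J + \tfrac{2\tau}{3} A) v^{n+1} - \tfrac{4}{3} v^n + \tfrac{1}{3} v^{n-1} + \tfrac{2\tau}{3} q^{n+1} - \tfrac{2\tau}{3} f^{n+1} - \tfrac{2\tau}{3} \bar\varepsilon^n,\ v^{n+1}- g^{n+1}\Big) = 0,\quad n\geq1,$$ for given perturbations (consistency errors) $\bar\varepsilon^n\in\mathbb{R}^J$. Let $e^n := v^n-u^n$, let $N(x):=\big(\sum_{j=1}^{J+1}|x_j-x_{j-1}|^2\big)^{1/2}$ for $x\in\mathbb{R}^J$ (with $x_0:=x_{J+1}:=0$), and let $\eta>0$, $\gamma\geq 0$ be constants such that $\langle e, Ae\rangle \geq \eta N(e/h)^2-\gamma\|e\|_2^2$ for all $e\in\mathbb{R}^J$ (such constants exist under the assumptions above). Then, for $\tau>0$ sufficiently small, there exist a constant $C_1$ independent of $n$ and a constant $\bar\gamma>0$ such that for all $t_n\leq T$ $$e^{-\bar\gamma t_n} \|e^{n+1}\|^2_2 + \tau\eta \sum_{k=1}^{n} e^{-\bar \gamma t_k} N(e^{k+1}/h)^2 \leq C_1\Big(\|e^0\|^2_2 + \|e^1\|^2_2 + \tau \sum_{k=1}^{n} e^{-\bar \gamma t_k} \|\bar\varepsilon^{k}\|^2_2\Big),$$ where $N(e^k/h)^2=\sum_{j=1}^{J+1} \big|\frac{e^k_j-e^k_{j-1}}{h}\big|^2$.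
   Context: Unconditional $L^2$ stability of the BDF2 obstacle scheme in the 1D setting: the matrix $A$ may in general depend on time but is written without time index. The proof uses the variational characterization $\min(Bx-c,x-g)=0 \iff x\geq g$ and $\langle Bx-c, w-x\rangle\geq 0$ for all $w\geq g$, and in it $\bar\gamma = 2+4\gamma$. *)

theory Defs
  imports Complex_Main
begin

text \<open>Vectors in R^J are represented as functions nat => real, only the
  indices 1..J being relevant.  Matrices as nat => nat => real, indices 1..J.\<close>

definition l2sq :: "nat \<Rightarrow> (nat \<Rightarrow> real) \<Rightarrow> real" where
  "l2sq J x = (\<Sum>j=1..J. (x j)^2)"

definition l2norm :: "nat \<Rightarrow> (nat \<Rightarrow> real) \<Rightarrow> real" where
  "l2norm J x = sqrt (l2sq J x)"

definition ext0 :: "nat \<Rightarrow> (nat \<Rightarrow> real) \<Rightarrow> nat \<Rightarrow> real" where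
  "ext0 J x j = (if 1 \<le> j \<and> j \<le> J then x j else 0)"

definition Nnorm :: "nat \<Rightarrow> (nat \<Rightarrow> real) \<Rightarrow> real" where
  "Nnorm J x = sqrt (\<Sum>j=1..J+1. \<bar>ext0 J x j - ext0 J x (j - 1)\<bar>^2)"

definition inner_J :: "nat \<Rightarrow> (nat \<Rightarrow> real) \<Rightarrow> (nat \<Rightarrow> real) \<Rightarrow> real" where
  "inner_J J x y = (\<Sum>j=1..J. x j * y j)"

definition matvec :: "nat \<Rightarrow> (nat \<Rightarrow> nat \<Rightarrow> real) \<Rightarrow> (nat \<Rightarrow> real) \<Rightarrow> nat \<Rightarrow> real" where
  "matvec J M x i = (\<Sum>j=1..J. M i j * x j)"

definition fd_matrix ::
  "(real \<Rightarrow> real \<Rightarrow> real) \<Rightarrow> (real \<Rightarrow> real \<Rightarrow> real) \<Rightarrow> (real \<Rightarrow> real \<Rightarrow> real)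
   \<Rightarrow> real \<Rightarrow> real \<Rightarrow> real \<Rightarrow> nat \<Rightarrow> nat \<Rightarrow> real" where
  "fd_matrix a b r Xmin h t i j =
    (let xi = Xmin + real i * h in
     if j = i then 2 * a t xi / h^2 + r t xi
     else if j = i + 1 then - a t xi / h^2 + b t xi / (2 * h)
     else if j + 1 = i then - a t xi / h^2 - b t xi / (2 * h)
     else 0)"

definition bdf2_step ::
  "nat \<Rightarrow> (nat \<Rightarrow> nat \<Rightarrow> real) \<Rightarrow> real \<Rightarrow> (nat \<Rightarrow> real) \<Rightarrow> (nat \<Rightarrow> real) \<Rightarrow> (nat \<Rightarrow> real)
   \<Rightarrow> (nat \<Rightarrow> real) \<Rightarrow> (nat \<Rightarrow> real) \<Rightarrow> (nat \<Rightarrow> real)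
   \<Rightarrow> (nat \<Rightarrow> real) \<Rightarrow> bool" where
  "bdf2_step J A tau wnew wcur wold q f g pert \<longleftrightarrow>
    (\<forall>i\<in>{1..J}.
       min (wnew i + 2/3 * tau * matvec J A wnew i - 4/3 * wcur i + 1/3 * wold i
              + 2/3 * tau * q i - 2/3 * tau * f i - 2/3 * tau * pert i)
           (wnew i - g i) = 0)"

end

theory Submission
  imports Defs
begin

text \<open>Subtracting the two obstacle schemes and using that min(F, G) = 0 is a monotone
  complementarity condition gives, for e = v - u, the variational inequality
  (3 e^{n+1} - 4 e^n + e^{n-1} + 2 tau A e^{n+1} - 2 tau eps^n, e^{n+1}) <= 0.
  The polarization identity
  2 a (3 a - 4 b + c) = a^2 + (2 a - b)^2 - b^2 - (2 b - c)^2 + (a - 2 b + c)^2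
  turns the BDF2 difference into the increment of the energy
  E_k = |e^k|^2 + |2 e^k - e^{k-1}|^2, and the Garding inequality for A gives
  (1 - (2 + 4 gamma) tau) E_{k+1} + 4 tau eta N(e^{k+1}/h)^2 <= E_k + 2 tau |eps^k|^2.
  Multiplying by the weights exp(-2 (2 + 4 gamma) t_k), which decay at least by the factor
  1 - (2 + 4 gamma) tau per step once (2 + 4 gamma) tau <= 1/2, and summing telescopes this
  into the estimate.\<close>

lemma l2sq_nonneg: "0 \<le> l2sq J x"
  unfolding l2sq_def by (simp add: sum_nonneg)

lemma l2norm_power2: "(l2norm J x)^2 = l2sq J x"
  unfolding l2norm_def using l2sq_nonneg by simp

lemma l2sq_two_diff_le: "l2sq J (\<lambda>j. 2 * x j - y j) \<le> 8 * l2sq J x + 2 * l2sq J y"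
proof -
  have "(2 * x j - y j)^2 \<le> 8 * (x j)^2 + 2 * (y j)^2" for j
    using zero_le_power2[of "2 * x j + y j"] by (simp add: power2_eq_square algebra_simps)
  then have "l2sq J (\<lambda>j. 2 * x j - y j) \<le> (\<Sum>j=1..J. 8 * (x j)^2 + 2 * (y j)^2)"
    unfolding l2sq_def by (rule sum_mono)
  also have "\<dots> = 8 * l2sq J x + 2 * l2sq J y"
    unfolding l2sq_def by (simp add: sum.distrib sum_distrib_left)
  finally show ?thesis .
qed

lemma matvec_diff: "matvec J M (x - y) i = matvec J M x i - matvec J M y i"
  unfolding matvec_def by (simp add: sum_subtractf algebra_simps)

lemma min_eq_zero_variation:
  fixes X Y X' Y' :: real
  assumes "min X Y = 0" and "min X' Y' = 0"
  shows "(X' - X) * (Y' - Y) \<le> 0"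
proof -
  have "0 \<le> X" "0 \<le> Y" "X * Y = 0"
    using assms(1) by (auto simp: min_def split: if_splits)
  moreover have "0 \<le> X'" "0 \<le> Y'" "X' * Y' = 0"
    using assms(2) by (auto simp: min_def split: if_splits)
  moreover have "(X' - X) * (Y' - Y) = X' * Y' + X * Y - X' * Y - X * Y'"
    by (simp add: algebra_simps)
  ultimately show ?thesis
    using mult_nonneg_nonneg[of X' Y] mult_nonneg_nonneg[of X Y'] by linarith
qed

lemma bdf2_step_difference_variational:
  assumes su: "bdf2_step J M \<tau> u2 u1 u0 q f g (\<lambda>j. 0)"
    and sv: "bdf2_step J M \<tau> v2 v1 v0 q f g eps"
    and i: "i \<in> {1..J}"
  shows "(3 * (v2 - u2) i - 4 * (v1 - u1) i + (v0 - u0) i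
          + 2 * \<tau> * matvec J M (v2 - u2) i - 2 * \<tau> * eps i) * (v2 - u2) i \<le> 0"
proof -
  let ?Fu = "u2 i + 2/3 * \<tau> * matvec J M u2 i - 4/3 * u1 i + 1/3 * u0 i
              + 2/3 * \<tau> * q i - 2/3 * \<tau> * f i - 2/3 * \<tau> * 0"
  let ?Fv = "v2 i + 2/3 * \<tau> * matvec J M v2 i - 4/3 * v1 i + 1/3 * v0 i
              + 2/3 * \<tau> * q i - 2/3 * \<tau> * f i - 2/3 * \<tau> * eps i"
  define D where "D = ?Fv - ?Fu"
  have "min ?Fu (u2 i - g i) = 0" "min ?Fv (v2 i - g i) = 0"
    using su sv i unfolding bdf2_step_def by blast+
  then have "D * ((v2 i - g i) - (u2 i - g i)) \<le> 0"
    unfolding D_def by (rule min_eq_zero_variation)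
  then have "3 * D * (v2 - u2) i \<le> 0"
    by (simp add: mult_nonneg_nonpos mult.assoc)
  moreover have "3 * D = 3 * (v2 - u2) i - 4 * (v1 - u1) i + (v0 - u0) i
          + 2 * \<tau> * matvec J M (v2 - u2) i - 2 * \<tau> * eps i"
    unfolding D_def by (simp add: matvec_diff algebra_simps)
  ultimately show ?thesis by simp
qed

lemma bdf2_polarization:
  fixes a b c :: real
  shows "2 * a * (3 * a - 4 * b + c)
    = a^2 + (2 * a - b)^2 - b^2 - (2 * b - c)^2 + (a - 2 * b + c)^2"
  by (simp add: power2_eq_square algebra_simps)

lemma bdf2_error_energy_step:
  fixes \<tau> \<eta> \<gamma> h :: real
  assumes coercive: "\<And>e. \<eta> * (Nnorm J (\<lambda>j. e j / h))^2 - \<gamma> * (l2norm J e)^2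
                         \<le> inner_J J e (matvec J M e)"
    and su: "bdf2_step J M \<tau> u2 u1 u0 q f g (\<lambda>j. 0)"
    and sv: "bdf2_step J M \<tau> v2 v1 v0 q f g eps"
    and "0 \<le> \<tau>" and "0 \<le> \<gamma>"
  shows "(1 - (2 + 4 * \<gamma>) * \<tau>) * (l2sq J (v2 - u2) + l2sq J (\<lambda>j. 2 * (v2 - u2) j - (v1 - u1) j))
          + 4 * \<tau> * \<eta> * (Nnorm J (\<lambda>j. (v2 - u2) j / h))^2
        \<le> l2sq J (v1 - u1) + l2sq J (\<lambda>j. 2 * (v1 - u1) j - (v0 - u0) j) + 2 * \<tau> * l2sq J eps"
proof -
  define a b c where "a = v2 - u2" and "b = v1 - u1" and "c = v0 - u0"
  define Ma where "Ma = matvec J M a"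
  have pointwise: "a i^2 + (2 * a i - b i)^2 - b i^2 - (2 * b i - c i)^2 + 4 * \<tau> * (a i * Ma i)
      \<le> 2 * \<tau> * (eps i)^2 + 2 * \<tau> * (a i)^2" if "i \<in> {1..J}" for i
  proof -
    have "(3 * a i - 4 * b i + c i + 2 * \<tau> * Ma i - 2 * \<tau> * eps i) * a i \<le> 0"
      using bdf2_step_difference_variational[OF su sv that] unfolding a_def b_def c_def Ma_def .
    moreover have "2 * ((3 * a i - 4 * b i + c i + 2 * \<tau> * Ma i - 2 * \<tau> * eps i) * a i)
      = 2 * a i * (3 * a i - 4 * b i + c i) + 4 * \<tau> * (a i * Ma i) - 4 * \<tau> * (eps i * a i)"
      by (simp add: algebra_simps)
    moreover have "4 * \<tau> * (eps i * a i) \<le> 2 * \<tau> * (eps i)^2 + 2 * \<tau> * (a i)^2"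
      using mult_left_mono[OF zero_le_power2[of "eps i - a i"] \<open>0 \<le> \<tau>\<close>]
      by (simp add: power2_eq_square algebra_simps)
    ultimately show ?thesis
      using bdf2_polarization[of "a i" "b i" "c i"] zero_le_power2[of "a i - 2 * b i + c i"]
      by linarith
  qed
  have "(\<Sum>i=1..J. a i^2 + (2 * a i - b i)^2 - b i^2 - (2 * b i - c i)^2 + 4 * \<tau> * (a i * Ma i))
      \<le> (\<Sum>i=1..J. 2 * \<tau> * (eps i)^2 + 2 * \<tau> * (a i)^2)"
    using pointwise by (rule sum_mono)
  then have energy: "l2sq J a + l2sq J (\<lambda>j. 2 * a j - b j) - l2sq J b - l2sq J (\<lambda>j. 2 * b j - c j)
      + 4 * \<tau> * inner_J J a Ma \<le> 2 * \<tau> * l2sq J eps + 2 * \<tau> * l2sq J a"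
    unfolding l2sq_def inner_J_def by (simp add: sum.distrib sum_subtractf sum_distrib_left)
  have "\<tau> * (\<eta> * (Nnorm J (\<lambda>j. a j / h))^2 - \<gamma> * l2sq J a) \<le> \<tau> * inner_J J a Ma"
    using coercive[of a] \<open>0 \<le> \<tau>\<close> unfolding Ma_def l2norm_power2 by (rule mult_left_mono)
  moreover have "0 \<le> \<tau> * l2sq J (\<lambda>j. 2 * a j - b j)"
    using \<open>0 \<le> \<tau>\<close> l2sq_nonneg by simp
  moreover from this have "0 \<le> \<gamma> * (\<tau> * l2sq J (\<lambda>j. 2 * a j - b j))"
    using \<open>0 \<le> \<gamma>\<close> by simp
  ultimately show ?thesis
    using energy
    unfolding a_def[symmetric] b_def[symmetric] c_def[symmetric] by (simp add: algebra_simps)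
qed

lemma exp_minus_two_le_one_minus:
  fixes x :: real
  assumes "0 \<le> x" and "x \<le> 1/2"
  shows "exp (-2 * x) \<le> 1 - x"
proof -
  have "exp (-2 * x) \<le> 1 / (1 + 2 * x)"
    using exp_ge_add_one_self[of "2 * x"] assms by (simp add: exp_minus divide_simps)
  also have "\<dots> \<le> 1 - x"
    using assms mult_nonneg_nonneg[of x "1 - 2 * x"] by (simp add: divide_simps algebra_simps)
  finally show ?thesis .
qed

lemma weighted_discrete_gronwall:
  fixes E D F :: "nat \<Rightarrow> real" and x :: real
  assumes "0 \<le> x" and "x \<le> 1/2" and E_nonneg: "\<And>k. 0 \<le> E k"
    and step: "\<And>k. 1 \<le> k \<Longrightarrow> k \<le> N \<Longrightarrow> (1 - x) * E (k + 1) + D k \<le> E k + F k"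
  shows "n \<le> N \<Longrightarrow> exp (-2 * x * n) * (1 - x) * E (n + 1) + (\<Sum>k=1..n. exp (-2 * x * k) * D k)
           \<le> E 1 + (\<Sum>k=1..n. exp (-2 * x * k) * F k)"
proof (induction n)
  case 0
  show ?case using E_nonneg[of 1] \<open>0 \<le> x\<close> by (simp add: algebra_simps)
next
  case (Suc n)
  let ?w = "\<lambda>k::nat. exp (-2 * x * k)"
  have "?w (Suc n) * ((1 - x) * E (n + 2) + D (Suc n)) \<le> ?w (Suc n) * (E (n + 1) + F (Suc n))"
    using step[of "Suc n"] Suc.prems by (intro mult_left_mono) auto
  moreover have "?w (Suc n) * E (n + 1) \<le> ?w n * (1 - x) * E (n + 1)"
  proof -
    have "?w (Suc n) = ?w n * exp (-2 * x)"
      by (simp add: exp_add[symmetric] algebra_simps)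
    then show ?thesis
      using exp_minus_two_le_one_minus[OF assms(1,2)] E_nonneg[of "n + 1"]
      by (simp add: mult_left_mono mult_right_mono)
  qed
  ultimately show ?case
    using Suc by (simp add: algebra_simps)
qed

definition bdf2_energy :: "nat \<Rightarrow> (nat \<Rightarrow> nat \<Rightarrow> real) \<Rightarrow> nat \<Rightarrow> real" where
  "bdf2_energy J e k = l2sq J (e k) + l2sq J (\<lambda>j. 2 * e k j - e (k - 1) j)"

lemma bdf2_energy_nonneg: "0 \<le> bdf2_energy J e k"
  unfolding bdf2_energy_def by (simp add: l2sq_nonneg)

lemma l2sq_le_bdf2_energy: "l2sq J (e k) \<le> bdf2_energy J e k"
  unfolding bdf2_energy_def by (simp add: l2sq_nonneg)

lemma bdf2_energy_le: "bdf2_energy J e k \<le> 9 * l2sq J (e k) + 2 * l2sq J (e (k - 1))"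
  using l2sq_two_diff_le[of J "e k" "e (k - 1)"] unfolding bdf2_energy_def by simp

lemma bdf2_error_estimate:
  fixes A :: "nat \<Rightarrow> nat \<Rightarrow> nat \<Rightarrow> real" and \<tau> \<eta> \<gamma> h :: real
    and u v eps q fv gv :: "nat \<Rightarrow> nat \<Rightarrow> real"
  assumes coercive: "\<And>n e. \<eta> * (Nnorm J (\<lambda>j. e j / h))^2 - \<gamma> * (l2norm J e)^2
                           \<le> inner_J J e (matvec J (A n) e)"
    and su: "\<forall>n. 1 \<le> n \<and> n \<le> N \<longrightarrow> bdf2_step J (A (n + 1)) \<tau> (u (n + 1)) (u n) (u (n - 1))
               (q (n + 1)) (fv (n + 1)) (gv (n + 1)) (\<lambda>j. 0)"
    and sv: "\<forall>n. 1 \<le> n \<and> n \<le> N \<longrightarrow> bdf2_step J (A (n + 1)) \<tau> (v (n + 1)) (v n) (v (n - 1))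
               (q (n + 1)) (fv (n + 1)) (gv (n + 1)) (eps n)"
    and "0 \<le> \<tau>" and small: "(2 + 4 * \<gamma>) * \<tau> \<le> 1/2" and "0 \<le> \<gamma>" and "0 \<le> \<eta>" and "n \<le> N"
  shows "exp (- (2 * (2 + 4 * \<gamma>)) * (real n * \<tau>)) * (l2norm J (\<lambda>j. v (n + 1) j - u (n + 1) j))^2
      + \<tau> * \<eta> * (\<Sum>k=1..n. exp (- (2 * (2 + 4 * \<gamma>)) * (real k * \<tau>))
                          * (Nnorm J (\<lambda>j. (v (k + 1) j - u (k + 1) j) / h))^2)
    \<le> 18 * ((l2norm J (\<lambda>j. v 0 j - u 0 j))^2 + (l2norm J (\<lambda>j. v 1 j - u 1 j))^2
      + \<tau> * (\<Sum>k=1..n. exp (- (2 * (2 + 4 * \<gamma>)) * (real k * \<tau>)) * (l2norm J (eps k))^2))"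
proof -
  define x where "x = (2 + 4 * \<gamma>) * \<tau>"
  define e where "e = (\<lambda>n j. v n j - u n j)"
  define E where "E = bdf2_energy J e"
  define w where "w k = exp (-2 * x * real k)" for k :: nat
  define dissip where "dissip = (\<Sum>k=1..n. w k * (Nnorm J (\<lambda>j. e (k + 1) j / h))^2)"
  define source where "source = (\<Sum>k=1..n. w k * l2sq J (eps k))"
  have "0 \<le> x" using \<open>0 \<le> \<tau>\<close> \<open>0 \<le> \<gamma>\<close> unfolding x_def by simp
  have energy_step: "(1 - x) * E (k + 1) + 4 * \<tau> * \<eta> * (Nnorm J (\<lambda>j. e (k + 1) j / h))^2
      \<le> E k + 2 * \<tau> * l2sq J (eps k)" if "1 \<le> k" "k \<le> N" for k
    using bdf2_error_energy_step[OF coercive su[rule_format, OF conjI[OF that]]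
        sv[rule_format, OF conjI[OF that]] \<open>0 \<le> \<tau>\<close> \<open>0 \<le> \<gamma>\<close>]
    unfolding E_def bdf2_energy_def e_def x_def by (simp add: fun_diff_def)
  from weighted_discrete_gronwall[where E = E and D = "\<lambda>k. 4 * \<tau> * \<eta> * (Nnorm J (\<lambda>j. e (k + 1) j / h))^2"
      and F = "\<lambda>k. 2 * \<tau> * l2sq J (eps k)",
      OF \<open>0 \<le> x\<close> small[folded x_def] bdf2_energy_nonneg[of J e, folded E_def] energy_step \<open>n \<le> N\<close>]
  have gronwall: "w n * (1 - x) * E (n + 1) + 4 * (\<tau> * \<eta> * dissip) \<le> E 1 + 2 * (\<tau> * source)"
    unfolding E_def w_def dissip_def source_def by (simp add: sum_distrib_left ac_simps)
  have "E (n + 1) \<le> 2 * (1 - x) * E (n + 1)"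
    using mult_right_mono[of 1 "2 * (1 - x)", OF _ bdf2_energy_nonneg] small
    unfolding E_def x_def by simp
  moreover have "l2sq J (e (n + 1)) \<le> E (n + 1)"
    unfolding E_def by (rule l2sq_le_bdf2_energy)
  ultimately have "w n * l2sq J (e (n + 1)) \<le> 2 * (w n * (1 - x) * E (n + 1))"
    using mult_left_mono[of "l2sq J (e (n + 1))" "2 * (1 - x) * E (n + 1)" "w n"]
    unfolding w_def by (simp add: algebra_simps)
  moreover have "0 \<le> \<tau> * \<eta> * dissip"
    using \<open>0 \<le> \<tau>\<close> \<open>0 \<le> \<eta>\<close> unfolding dissip_def w_def by (simp add: sum_nonneg)
  ultimately have "w n * l2sq J (e (n + 1)) + \<tau> * \<eta> * dissip
      \<le> 2 * (w n * (1 - x) * E (n + 1) + 4 * (\<tau> * \<eta> * dissip))"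
    unfolding distrib_left by linarith
  also have "\<dots> \<le> 2 * (E 1 + 2 * (\<tau> * source))"
    using gronwall by simp
  also have "\<dots> \<le> 18 * (l2sq J (e 0) + l2sq J (e 1) + \<tau> * source)"
  proof -
    have "E 1 \<le> 9 * l2sq J (e 1) + 2 * l2sq J (e 0)"
      using bdf2_energy_le[of J e 1] unfolding E_def by simp
    moreover have "0 \<le> \<tau> * source"
      using \<open>0 \<le> \<tau>\<close> l2sq_nonneg unfolding source_def w_def by (simp add: sum_nonneg)
    ultimately show ?thesis
      using l2sq_nonneg[of J "e 0"] unfolding distrib_left by linarith
  qed
  finally have "w n * l2sq J (e (n + 1)) + \<tau> * \<eta> * dissip
      \<le> 18 * (l2sq J (e 0) + l2sq J (e 1) + \<tau> * source)" .
  moreover have "exp (- (2 * (2 + 4 * \<gamma>)) * (real k * \<tau>)) = w k" for k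
    unfolding w_def x_def by (simp add: algebra_simps)
  ultimately show ?thesis
    unfolding dissip_def source_def e_def l2norm_power2 by simp
qed

lemma time_index_le:
  assumes "0 < T" and "0 < N" and "\<tau> = T / real N" and "real n * \<tau> \<le> T"
  shows "n \<le> N"
proof -
  have "0 < \<tau>" and "real N * \<tau> = T"
    using assms(1-3) by simp_all
  then have "real n * \<tau> \<le> real N * \<tau>"
    using assms(4) by simp
  with \<open>0 < \<tau>\<close> show ?thesis
    by simp
qed

theorem proposition4p7:
  fixes T Xmin Xmax \<eta> \<gamma> :: real
    and a b r :: "real \<Rightarrow> real \<Rightarrow> real"
    and J :: nat
  assumes T_pos: "T > 0"
    and dom: "Xmin < Xmax"
    and J_pos: "J \<ge> 1"
    and a_bdd: "\<exists>M. \<forall>t x. \<bar>a t x\<bar> \<le> M"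
    and b_bdd: "\<exists>M. \<forall>t x. \<bar>b t x\<bar> \<le> M"
    and r_bdd: "\<exists>M. \<forall>t x. \<bar>r t x\<bar> \<le> M"
    and elliptic: "\<exists>\<eta>0>0. \<forall>t x. a t x \<ge> \<eta>0"
    and a_lip: "\<exists>L. \<forall>t x y. \<bar>a t x - a t y\<bar> \<le> L * \<bar>x - y\<bar>"
    and eta_pos: "\<eta> > 0" and gamma_nonneg: "\<gamma> \<ge> 0"
    and coercive: "\<forall>t (e :: nat \<Rightarrow> real).
        inner_J J e (matvec J (fd_matrix a b r Xmin ((Xmax - Xmin) / real (J + 1)) t) e)
          \<ge> \<eta> * (Nnorm J (\<lambda>j. e j / ((Xmax - Xmin) / real (J + 1))))^2
             - \<gamma> * (l2norm J e)^2"
  shows "\<exists>\<tau>0 > 0. \<exists>C1. \<exists>\<gamma>bar > 0.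
     \<forall>(N :: nat) \<tau> (\<phi> :: real \<Rightarrow> real \<Rightarrow> real) (f :: real \<Rightarrow> real \<Rightarrow> real)
       (q :: nat \<Rightarrow> nat \<Rightarrow> real) (u :: nat \<Rightarrow> nat \<Rightarrow> real) (v :: nat \<Rightarrow> nat \<Rightarrow> real)
       (\<epsilon> :: nat \<Rightarrow> nat \<Rightarrow> real).
       let h = (Xmax - Xmin) / real (J + 1);
           xg = (\<lambda>j. Xmin + real j * h);
           fv = (\<lambda>n j. f (real n * \<tau>) (xg j));
           gv = (\<lambda>n j. \<phi> (real n * \<tau>) (xg j) + f (real n * \<tau>) (xg j));
           A = (\<lambda>n. fd_matrix a b r Xmin h (real n * \<tau>));
           e = (\<lambda>n j. v n j - u n j)
       in
       (N > 0 \<and> \<tau> = T / real N \<and> \<tau> \<le> \<tau>0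
        \<and> (\<forall>n. 1 \<le> n \<and> n \<le> N \<longrightarrow>
              bdf2_step J (A (n + 1)) \<tau> (u (n + 1)) (u n) (u (n - 1))
                (q (n + 1)) (fv (n + 1)) (gv (n + 1)) (\<lambda>j. 0))
        \<and> (\<forall>n. 1 \<le> n \<and> n \<le> N \<longrightarrow>
              bdf2_step J (A (n + 1)) \<tau> (v (n + 1)) (v n) (v (n - 1))
                (q (n + 1)) (fv (n + 1)) (gv (n + 1)) (\<epsilon> n)))
       \<longrightarrow> (\<forall>n. real n * \<tau> \<le> T \<longrightarrow>
             exp (- \<gamma>bar * (real n * \<tau>)) * (l2norm J (e (n + 1)))^2
             + \<tau> * \<eta> * (\<Sum>k=1..n. exp (- \<gamma>bar * (real k * \<tau>))
                                 * (Nnorm J (\<lambda>j. e (k + 1) j / h))^2)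
             \<le> C1 * ((l2norm J (e 0))^2 + (l2norm J (e 1))^2
                     + \<tau> * (\<Sum>k=1..n. exp (- \<gamma>bar * (real k * \<tau>)) * (l2norm J (\<epsilon> k))^2)))"
proof -
  define \<gamma>bar where "\<gamma>bar = 2 + 4 * \<gamma>"
  have "0 < \<gamma>bar" using gamma_nonneg unfolding \<gamma>bar_def by simp
  show ?thesis
    unfolding Let_def
    apply (rule exI[of _ "1 / (2 * \<gamma>bar)"], rule conjI, use \<open>0 < \<gamma>bar\<close> in simp)
    \<comment> \<open>The rate is 2 (2 + 4 gamma), twice the paper's gamma_bar: as exp(-x) >= 1 - x, only
        exp(-2 x) <= 1 - x (for x <= 1/2) absorbs the factor 1 - (2 + 4 gamma) tau.\<close>
    apply (rule exI[of _ 18], rule exI[of _ "2 * \<gamma>bar"], rule conjI, use \<open>0 < \<gamma>bar\<close> in simp)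
    apply (intro allI impI, elim conjE)
    subgoal premises prems for N \<tau> \<phi> f q u v \<epsilon> n
    proof -
      have "0 < \<tau>"
        using \<open>0 < N\<close> \<open>\<tau> = T / real N\<close> T_pos by simp
      have small: "(2 + 4 * \<gamma>) * \<tau> \<le> 1/2"
        using \<open>\<tau> \<le> 1 / (2 * \<gamma>bar)\<close> \<open>0 < \<gamma>bar\<close> unfolding \<gamma>bar_def by (simp add: field_simps)
      have "n \<le> N"
        using time_index_le[OF T_pos \<open>0 < N\<close> \<open>\<tau> = T / real N\<close> \<open>real n * \<tau> \<le> T\<close>] .
      from bdf2_error_estimate[where A = "\<lambda>n. fd_matrix a b r Xmin ((Xmax - Xmin) / real (J + 1)) (real n * \<tau>)",
          OF coercive[rule_format] prems(5,6) less_imp_le[OF \<open>0 < \<tau>\<close>] small gamma_nonneg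
          less_imp_le[OF eta_pos] \<open>n \<le> N\<close>]
      show ?thesis
        unfolding \<gamma>bar_def .
    qed
    done
qed

end
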